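(* Let $w\ge 2$ and let $f$ be a function from the vertex set of $J(n,w)$ to $\{-1,0,1\}$, not identically zero, which is a $\lambda_1(n,w)$-eigenfunction of $J(n,w)$, where $\lambda_1(n,w)=(w-1)(n-w-1)-1$. Then $f$ is equivalent, up to multiplication by a non-zero constant, to one of the following functions of $x=(x_1,\dots,x_n)$: (1) $f_1(x)=1$ if $x_1=1,x_2=0$; $f_1(x)=-1$ if $x_1=0,x_2=1$; $f_1(x)=0$ otherwise (here $w\ge2$, $n\ge 2w$); (2) $f_2(x)=1$ if $x_1=x_2=1$; $f_2(x)=-1$ if $x_1=x_2=0$; $f_2(x)=0$ otherwise (here $w\ge 2$, $n=2w$); (3) $f_3(x)=1$ if $x_1=1$; $f_3(x)=-1$ if $x_1=0$ (here $w\ge2$, $n=2w$); (4) $f_4(x)=1$ if $\mathrm{Supp}(x)\subseteq\{1,\dots,n/2\}$; $f_4(x)=-1$ if $\mathrm{Supp}(x)\subseteq\{n/2+1,\dots,n\}$; $f_4(x)=0$ otherwise (here $w=2$, $n\ge 2w$, $n$ even).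
   Context: The Johnson graph $J(n,w)$ has as vertices the binary vectors $x=(x_1,\dots,x_n)$ with exactly $w$ ones; two vertices are adjacent iff they have exactly $w-1$ common ones. A real function $f$ on the vertex set is a $\lambda$-eigenfunction if it is not identically zero and $\lambda f(x)=\sum_{y\sim x} f(y)$ for every vertex $x$. $\mathrm{Supp}(x)$ is the set of coordinates where $x$ has a one. Two functions $g_1,g_2$ on $J(n,w)$ are equivalent if there is a permutation $\pi\in S_n$ of the coordinates with $g_1(x)=g_2(\pi x)$ for all vertices $x$. *)

theory Defs
  imports "HOL-Combinatorics.Permutations" Complex_Main
begin

text \<open>A binary vector x of length n with exactly w ones is identified with its
support Supp(x), a w-subset of {1..n}. Coordinate i of x is 1 iff i is in the set.\<close>

definition johnson_vertices :: "nat \<Rightarrow> nat \<Rightarrow> nat set set" where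
  "johnson_vertices n w = {S. S \<subseteq> {1..n} \<and> card S = w}"

definition johnson_adj :: "nat \<Rightarrow> nat set \<Rightarrow> nat set \<Rightarrow> bool" where
  "johnson_adj w S T \<longleftrightarrow> card (S \<inter> T) = w - 1"

definition is_eigenfunction :: "nat \<Rightarrow> nat \<Rightarrow> real \<Rightarrow> (nat set \<Rightarrow> real) \<Rightarrow> bool" where
  "is_eigenfunction n w lam f \<longleftrightarrow>
     (\<exists>x\<in>johnson_vertices n w. f x \<noteq> 0) \<and>
     (\<forall>x\<in>johnson_vertices n w.
        lam * f x = (\<Sum>y\<in>{y\<in>johnson_vertices n w. johnson_adj w x y}. f y))"

definition lambda1 :: "nat \<Rightarrow> nat \<Rightarrow> real" where
  "lambda1 n w = (real w - 1) * (real n - real w - 1) - 1"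

definition f1 :: "nat set \<Rightarrow> real" where
  "f1 S = (if 1 \<in> S \<and> 2 \<notin> S then 1 else if 1 \<notin> S \<and> 2 \<in> S then -1 else 0)"

definition f2 :: "nat set \<Rightarrow> real" where
  "f2 S = (if 1 \<in> S \<and> 2 \<in> S then 1 else if 1 \<notin> S \<and> 2 \<notin> S then -1 else 0)"

definition f3 :: "nat set \<Rightarrow> real" where
  "f3 S = (if 1 \<in> S then 1 else -1)"

definition f4 :: "nat \<Rightarrow> nat set \<Rightarrow> real" where
  "f4 n S = (if S \<subseteq> {1..n div 2} then 1
             else if S \<subseteq> {n div 2 + 1..n} then -1 else 0)"

text \<open>g1 and g2 are equivalent on J(n,w) if g1(x) = g2(pi x) for a coordinate
permutation pi; on supports, pi acts by taking images.\<close>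
definition equivalent_fun :: "nat \<Rightarrow> nat \<Rightarrow> (nat set \<Rightarrow> real) \<Rightarrow> (nat set \<Rightarrow> real) \<Rightarrow> bool" where
  "equivalent_fun n w g1 g2 \<longleftrightarrow>
     (\<exists>\<pi>. \<pi> permutes {1..n} \<and> (\<forall>x\<in>johnson_vertices n w. g1 x = g2 (\<pi> ` x)))"

end

(*
  Let D sum a function on the w-subsets of an n-set over the supersets of a (w-1)-set, and U sum
  a function on (w-1)-sets over the subsets of a w-set. The adjacency operator of J(n,w) is U D - w,
  so a lambda_1-eigenfunction f satisfies U D f = (w-1)(n-w) f. The commutation rule
  D U = U D + (n - 2r) on r-sets, combined with Cauchy-Schwarz and induction on the level, shows
  that U D is at most (w-2)(n-w-1) on functions orthogonal to all stars {S. i \<in> S}. Hence f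
  coincides with its projection to the span of the stars: f(S) = \<Sum>i\<in>S. c i with \<Sum>i. c i = 0.

  If f takes values in {-1, 0, 1}, then c i - c j = f(R + i) - f(R + j) lies in {-2, ..., 2}.
  When max c - min c = 2, attained at a and b, every (w-1)-set R avoiding a and b has
  f(R + a) = 1 and f(R + b) = -1; this forces all other weights to be equal and yields f1, or f3
  when n = 2w. When max c - min c = 1, f(S) = const + |S \<inter> A| for the set A of heavier
  coordinates; exchanging one element of a set on which f is 1 or -1 must keep the value in
  {-1, 0, 1}, which pins down |A| and gives f2 (n = 2w) or f4 (w = 2).
*)

theory Submission
  imports Defs "HOL-Analysis.Convex"
begin

section \<open>Up and down operators on the levels of the Boolean lattice\<close>

definition k_subsets :: "'a set \<Rightarrow> nat \<Rightarrow> 'a set set" where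
  "k_subsets X k = {S. S \<subseteq> X \<and> card S = k}"

definition down :: "'a set \<Rightarrow> nat \<Rightarrow> ('a set \<Rightarrow> real) \<Rightarrow> 'a set \<Rightarrow> real" where
  "down X k h T = (\<Sum>S\<in>k_subsets X k. if T \<subseteq> S then h S else 0)"

definition up :: "'a set \<Rightarrow> nat \<Rightarrow> ('a set \<Rightarrow> real) \<Rightarrow> 'a set \<Rightarrow> real" where
  "up X r g S = (\<Sum>T\<in>k_subsets X r. if T \<subseteq> S then g T else 0)"

definition sq_norm :: "'a set \<Rightarrow> nat \<Rightarrow> ('a set \<Rightarrow> real) \<Rightarrow> real" where
  "sq_norm X k h = (\<Sum>S\<in>k_subsets X k. (h S)\<^sup>2)"

definition star_sums_vanish :: "'a set \<Rightarrow> nat \<Rightarrow> ('a set \<Rightarrow> real) \<Rightarrow> bool" where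
  "star_sums_vanish X k h \<longleftrightarrow> (\<forall>i\<in>X. down X k h {i} = 0)"

lemma finite_k_subsets [simp]: "finite X \<Longrightarrow> finite (k_subsets X k)"
  unfolding k_subsets_def by (rule finite_subset[of _ "Pow X"]) auto

lemma k_subsetsD:
  assumes "finite X" "S \<in> k_subsets X k"
  shows "S \<subseteq> X" "card S = k" "finite S"
  using assms finite_subset unfolding k_subsets_def by auto

lemma card_k_subsets_supersets:
  assumes X: "finite X" and A: "A \<subseteq> X" "card A \<le> k"
  shows "card {S\<in>k_subsets X k. A \<subseteq> S} = (card X - card A) choose (k - card A)"
proof -
  have fA: "finite A" using X A finite_subset by blast
  have "bij_betw (\<lambda>S. S - A) {S\<in>k_subsets X k. A \<subseteq> S} (k_subsets (X - A) (k - card A))"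
  proof (rule bij_betw_byWitness[where f' = "\<lambda>B. B \<union> A"])
    show "(\<lambda>S. S - A) ` {S\<in>k_subsets X k. A \<subseteq> S} \<subseteq> k_subsets (X - A) (k - card A)"
      using fA by (auto simp: k_subsets_def card_Diff_subset)
    show "(\<lambda>B. B \<union> A) ` k_subsets (X - A) (k - card A) \<subseteq> {S\<in>k_subsets X k. A \<subseteq> S}"
    proof (rule image_subsetI)
      fix B assume "B \<in> k_subsets (X - A) (k - card A)"
      then have B: "B \<subseteq> X - A" "card B = k - card A" "finite B"
        using X finite_subset unfolding k_subsets_def by auto
      then have "card (B \<union> A) = k" using A fA by (subst card_Un_disjoint) auto
      then show "B \<union> A \<in> {S\<in>k_subsets X k. A \<subseteq> S}" using A B by (auto simp: k_subsets_def)
    qed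
  qed (auto simp: k_subsets_def)
  then have "card {S\<in>k_subsets X k. A \<subseteq> S} = card (k_subsets (X - A) (k - card A))"
    by (rule bij_betw_same_card)
  also have "\<dots> = card (X - A) choose (k - card A)"
    unfolding k_subsets_def using X by (intro n_subsets) auto
  finally show ?thesis using A fA by (simp add: card_Diff_subset)
qed

lemma sum_if_sum_if_eq_sum_card:
  fixes g :: "'b \<Rightarrow> real"
  assumes "finite P" "finite Q"
  shows "(\<Sum>p\<in>P. if R p then (\<Sum>q\<in>Q. if R' p q then g q else 0) else 0)
       = (\<Sum>q\<in>Q. real (card {p\<in>P. R p \<and> R' p q}) * g q)"
proof -
  have "(\<Sum>p\<in>P. if R p then (\<Sum>q\<in>Q. if R' p q then g q else 0) else 0)
      = (\<Sum>q\<in>Q. \<Sum>p\<in>P. if R p \<and> R' p q then g q else 0)"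
    by (subst sum.swap) (auto intro!: sum.cong)
  also have "\<dots> = (\<Sum>q\<in>Q. real (card {p\<in>P. R p \<and> R' p q}) * g q)"
    using assms by (intro sum.cong refl) (simp add: sum.If_cases Int_def)
  finally show ?thesis .
qed

lemma up_down_adjoint:
  assumes "finite X"
  shows "(\<Sum>T\<in>k_subsets X r. g T * down X k h T) = (\<Sum>S\<in>k_subsets X k. up X r g S * h S)"
proof -
  have "(\<Sum>T\<in>k_subsets X r. g T * down X k h T)
      = (\<Sum>T\<in>k_subsets X r. \<Sum>S\<in>k_subsets X k. if T \<subseteq> S then g T * h S else 0)"
    unfolding down_def by (simp add: sum_distrib_left if_distrib cong: if_cong)
  also have "\<dots> = (\<Sum>S\<in>k_subsets X k. \<Sum>T\<in>k_subsets X r. if T \<subseteq> S then g T * h S else 0)"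
    by (rule sum.swap)
  also have "\<dots> = (\<Sum>S\<in>k_subsets X k. up X r g S * h S)"
    unfolding up_def sum_distrib_right by (intro sum.cong refl) auto
  finally show ?thesis .
qed

lemma up_down_eq:
  assumes X: "finite X" and S: "S \<subseteq> X"
  shows "up X r (down X k h) S = (\<Sum>S'\<in>k_subsets X k. real (card (S \<inter> S') choose r) * h S')"
proof -
  have "up X r (down X k h) S
      = (\<Sum>S'\<in>k_subsets X k. real (card {T\<in>k_subsets X r. T \<subseteq> S \<and> T \<subseteq> S'}) * h S')"
    unfolding up_def down_def using X by (intro sum_if_sum_if_eq_sum_card) auto
  also have "\<dots> = (\<Sum>S'\<in>k_subsets X k. real (card (S \<inter> S') choose r) * h S')"
  proof (intro sum.cong refl)
    fix S' assume "S' \<in> k_subsets X k"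
    have "{T\<in>k_subsets X r. T \<subseteq> S \<and> T \<subseteq> S'} = {T. T \<subseteq> S \<inter> S' \<and> card T = r}"
      using S unfolding k_subsets_def by auto
    moreover have "finite (S \<inter> S')" using X S finite_subset by blast
    ultimately have "card {T\<in>k_subsets X r. T \<subseteq> S \<and> T \<subseteq> S'} = card (S \<inter> S') choose r"
      by (metis n_subsets)
    then show "real (card {T\<in>k_subsets X r. T \<subseteq> S \<and> T \<subseteq> S'}) * h S'
        = real (card (S \<inter> S') choose r) * h S'"
      by simp
  qed
  finally show ?thesis .
qed

lemma down_up_eq:
  assumes "finite X"
  shows "down X k (up X r g) T
       = (\<Sum>T'\<in>k_subsets X r. real (card {S\<in>k_subsets X k. T \<union> T' \<subseteq> S}) * g T')"
  unfolding up_def down_def using assms sum_if_sum_if_eq_sum_card[of "k_subsets X k" "k_subsets X r"]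
  by simp

lemma card_Int_less:
  assumes "finite T" "finite T'" "card T' = card T" "T \<noteq> T'"
  shows "card (T \<inter> T') < card T"
proof -
  have "card (T \<inter> T') \<le> card T" using assms(1) by (simp add: card_mono)
  moreover have "card (T \<inter> T') \<noteq> card T"
  proof
    assume "card (T \<inter> T') = card T"
    then have "T \<inter> T' = T" using assms(1) by (intro card_subset_eq) auto
    then have "T \<subseteq> T'" by blast
    then show False using card_subset_eq[OF assms(2)] assms(3,4) by auto
  qed
  ultimately show ?thesis by simp
qed

lemma card_supersets_Un_Suc:
  assumes X: "finite X" and T: "T \<in> k_subsets X r" and T': "T' \<in> k_subsets X r" and r: "r \<ge> 1"
  shows "real (card {S\<in>k_subsets X (Suc r). T \<union> T' \<subseteq> S})
       = real (card (T \<inter> T') choose (r - 1)) + (if T' = T then real (card X) - 2 * real r else 0)"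
proof (cases "T' = T")
  case True
  have "r \<le> card X" using k_subsetsD[OF X T] X card_mono by metis
  moreover have "card {S\<in>k_subsets X (Suc r). T \<subseteq> S} = card X - r"
    using card_k_subsets_supersets[OF X, of T "Suc r"] k_subsetsD[OF X T] by simp
  moreover have "r choose (r - 1) = r" using r by (cases r) auto
  ultimately show ?thesis using True k_subsetsD[OF X T] by (simp add: of_nat_diff)
next
  case False
  note fin = k_subsetsD(3)[OF X T] k_subsetsD(3)[OF X T']
  have "card (T \<inter> T') < r"
    using card_Int_less[OF fin] False k_subsetsD(2)[OF X T] k_subsetsD(2)[OF X T'] by auto
  moreover have "card (T \<union> T') + card (T \<inter> T') = 2 * r"
    using card_Un_Int[OF fin] k_subsetsD[OF X T] k_subsetsD[OF X T'] by simp
  moreover have "T \<union> T' \<subseteq> X" using k_subsetsD[OF X T] k_subsetsD[OF X T'] by auto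
  ultimately consider "card (T \<inter> T') = r - 1" "card (T \<union> T') = Suc r"
    | "card (T \<inter> T') < r - 1" "card (T \<union> T') > Suc r"
    by linarith
  then show ?thesis
  proof cases
    case 1
    then show ?thesis using False card_k_subsets_supersets[OF X \<open>T \<union> T' \<subseteq> X\<close>] by simp
  next
    case 2
    have "\<not> T \<union> T' \<subseteq> S" if S: "S \<in> k_subsets X (Suc r)" for S
    proof
      assume "T \<union> T' \<subseteq> S"
      then have "card (T \<union> T') \<le> card S" by (rule card_mono[OF k_subsetsD(3)[OF X S]])
      then show False using 2 k_subsetsD(2)[OF X S] by simp
    qed
    then have "card {S\<in>k_subsets X (Suc r). T \<union> T' \<subseteq> S} = 0"
      by (metis (no_types, lifting) card.empty empty_Collect_eq)
    then show ?thesis using 2 False by (simp del: Un_subset_iff)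
  qed
qed

lemma down_up_commute:
  assumes X: "finite X" and T: "T \<in> k_subsets X r" and r: "r \<ge> 1"
  shows "down X (Suc r) (up X r g) T
       = up X (r - 1) (down X r g) T + (real (card X) - 2 * real r) * g T"
proof -
  have "down X (Suc r) (up X r g) T = (\<Sum>T'\<in>k_subsets X r. real (card (T \<inter> T') choose (r - 1)) * g T'
      + (if T' = T then (real (card X) - 2 * real r) * g T' else 0))"
    unfolding down_up_eq[OF X]
    by (intro sum.cong refl) (use card_supersets_Un_Suc[OF X T _ r] in \<open>simp add: algebra_simps\<close>)
  also have "\<dots> = up X (r - 1) (down X r g) T + (real (card X) - 2 * real r) * g T"
    using T X by (simp add: sum.distrib up_down_eq k_subsets_def)
  finally show ?thesis .
qed

lemma sq_norm_nonneg: "sq_norm X k h \<ge> 0"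
  unfolding sq_norm_def by (simp add: sum_nonneg)

lemma sq_norm_up:
  assumes X: "finite X" and k: "k \<ge> 1"
  shows "sq_norm X (Suc k) (up X k g)
       = sq_norm X (k - 1) (down X k g) + (real (card X) - 2 * real k) * sq_norm X k g"
proof -
  have "sq_norm X (Suc k) (up X k g) = (\<Sum>T\<in>k_subsets X k. g T * down X (Suc k) (up X k g) T)"
    unfolding sq_norm_def power2_eq_square by (rule up_down_adjoint[OF X, symmetric])
  also have "\<dots> = (\<Sum>T\<in>k_subsets X k.
      up X (k - 1) (down X k g) T * g T + (real (card X) - 2 * real k) * (g T)\<^sup>2)"
    by (intro sum.cong refl) (simp add: down_up_commute[OF X _ k] algebra_simps power2_eq_square)
  also have "\<dots> = sq_norm X (k - 1) (down X k g) + (real (card X) - 2 * real k) * sq_norm X k g"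
    unfolding sq_norm_def power2_eq_square
    by (simp add: sum.distrib sum_distrib_left up_down_adjoint[OF X, symmetric])
  finally show ?thesis .
qed

lemma down_down:
  assumes X: "finite X" and T: "T \<subseteq> X" "card T \<le> r"
  shows "down X r (down X k h) T = real ((k - card T) choose (r - card T)) * down X k h T"
proof -
  have "down X r (down X k h) T
      = (\<Sum>S\<in>k_subsets X k. real (card {R\<in>k_subsets X r. T \<subseteq> R \<and> R \<subseteq> S}) * h S)"
    unfolding down_def using X by (intro sum_if_sum_if_eq_sum_card) auto
  also have "\<dots> = (\<Sum>S\<in>k_subsets X k.
      real ((k - card T) choose (r - card T)) * (if T \<subseteq> S then h S else 0))"
  proof (intro sum.cong refl)
    fix S assume S: "S \<in> k_subsets X k"
    show "real (card {R\<in>k_subsets X r. T \<subseteq> R \<and> R \<subseteq> S}) * h S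
        = real ((k - card T) choose (r - card T)) * (if T \<subseteq> S then h S else 0)"
    proof (cases "T \<subseteq> S")
      case True
      have "{R\<in>k_subsets X r. T \<subseteq> R \<and> R \<subseteq> S} = {R\<in>k_subsets S r. T \<subseteq> R}"
        using k_subsetsD[OF X S] unfolding k_subsets_def by auto
      then show ?thesis
        using True card_k_subsets_supersets[OF k_subsetsD(3)[OF X S] True T(2)] k_subsetsD[OF X S]
        by simp
    next
      case False
      then have "{R\<in>k_subsets X r. T \<subseteq> R \<and> R \<subseteq> S} = {}" by blast
      then have "card {R\<in>k_subsets X r. T \<subseteq> R \<and> R \<subseteq> S} = 0" by (simp only: card.empty)
      then show ?thesis using False by simp
    qed
  qed
  also have "\<dots> = real ((k - card T) choose (r - card T)) * down X k h T"
    unfolding down_def by (simp add: sum_distrib_left)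
  finally show ?thesis .
qed

lemma star_sums_vanish_down:
  assumes X: "finite X" and r: "r \<ge> 1" and h: "star_sums_vanish X (Suc r) h"
  shows "star_sums_vanish X r (down X (Suc r) h)"
  using h down_down[OF X, of "{_}" r "Suc r" h] r unfolding star_sums_vanish_def by auto

text \<open>On level k the eigenvalues of \<open>up (k - 1) \<circ> down k\<close> are (k - j)(|X| - k - j + 1) for j \<le> k;
  the star indicators span the eigenspaces j \<le> 1, so on their orthogonal complement the operator is
  bounded by the value for j = 2.\<close>
lemma sq_norm_down_le:
  assumes X: "finite X" and k: "2 \<le> k" "2 * k \<le> card X" and h: "star_sums_vanish X k h"
  shows "sq_norm X (k - 1) (down X k h) \<le> (real k - 2) * (real (card X) - real k - 1) * sq_norm X k h"
  using k h
proof (induction k arbitrary: h rule: nat_induct_at_least)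
  case base
  have "down X 2 h T = 0" if "T \<in> k_subsets X 1" for T
    using that base.prems(2) by (auto simp: k_subsets_def card_1_singleton_iff star_sums_vanish_def)
  then show ?case by (simp add: sq_norm_def)
next
  case (Suc k)
  define g where "g = down X (Suc k) h"
  define G where "G = sq_norm X k g"
  define H where "H = sq_norm X (Suc k) h"
  define \<beta> where "\<beta> = (real (Suc k) - 2) * (real (card X) - real (Suc k) - 1)"
  have "sq_norm X (k - 1) (down X k g) \<le> (real k - 2) * (real (card X) - real k - 1) * G"
    using Suc star_sums_vanish_down[OF X _ Suc.prems(2)] unfolding g_def G_def by auto
  then have up_le: "sq_norm X (Suc k) (up X k g) \<le> \<beta> * G"
    using sq_norm_up[OF X, of k g] Suc.hyps unfolding G_def \<beta>_def by (simp add: algebra_simps)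
  have "G = (\<Sum>S\<in>k_subsets X (Suc k). up X k g S * h S)"
    unfolding G_def sq_norm_def power2_eq_square g_def by (rule up_down_adjoint[OF X])
  then have "G\<^sup>2 \<le> sq_norm X (Suc k) (up X k g) * H"
    unfolding sq_norm_def H_def by (simp add: Cauchy_Schwarz_ineq_sum)
  also have "\<dots> \<le> \<beta> * G * H"
    using up_le sq_norm_nonneg unfolding H_def by (rule mult_right_mono)
  finally have "G * G \<le> (\<beta> * H) * G" by (simp add: power2_eq_square algebra_simps)
  moreover have "G \<ge> 0" "H \<ge> 0" "\<beta> \<ge> 0"
    using sq_norm_nonneg Suc unfolding G_def H_def \<beta>_def by auto
  ultimately have "G \<le> \<beta> * H"
    by (metis mult_right_le_imp_le mult_nonneg_nonneg order.not_eq_order_implies_strict)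
  then show ?case unfolding G_def g_def \<beta>_def H_def by simp
qed

section \<open>Linear functions S \<mapsto> \<Sum>i\<in>S. c i\<close>

lemma down_diff: "down X k (\<lambda>S. f S - g S) = (\<lambda>T. down X k f T - down X k g T)"
  unfolding down_def by (simp add: sum_subtractf[symmetric] if_distrib cong: if_cong)

lemma up_diff: "up X r (\<lambda>T. f T - g T) S = up X r f S - up X r g S"
  unfolding up_def by (simp add: sum_subtractf[symmetric] if_distrib cong: if_cong)

lemma up_add: "up X r (\<lambda>T. f T + g T) S = up X r f S + up X r g S"
  unfolding up_def by (simp add: sum.distrib[symmetric] if_distrib cong: if_cong)

lemma up_scale: "up X r (\<lambda>T. a * f T) S = a * up X r f S"
  unfolding up_def by (simp add: sum_distrib_left if_distrib cong: if_cong)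

lemma up_cong: "(\<And>T. T \<in> k_subsets X r \<Longrightarrow> T \<subseteq> S \<Longrightarrow> f T = g T) \<Longrightarrow> up X r f S = up X r g S"
  unfolding up_def by (intro sum.cong) auto

lemma up_const:
  assumes "finite X" "S \<subseteq> X"
  shows "up X r (\<lambda>_. a) S = real (card S choose r) * a"
proof -
  have "{T\<in>k_subsets X r. T \<subseteq> S} = {T. T \<subseteq> S \<and> card T = r}"
    using assms(2) unfolding k_subsets_def by auto
  moreover have "finite S" using assms finite_subset by blast
  ultimately show ?thesis
    unfolding up_def using assms(1) by (simp add: sum.If_cases Int_def n_subsets)
qed

lemma down_const:
  assumes "finite X" "T \<subseteq> X" "card T \<le> k"
  shows "down X k (\<lambda>_. a) T = real ((card X - card T) choose (k - card T)) * a"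
  unfolding down_def using assms card_k_subsets_supersets[OF assms]
  by (simp add: sum.If_cases Int_def)

lemma sum_k_subsets_1: "(\<Sum>T\<in>k_subsets X 1. g T) = (\<Sum>i\<in>X. g {i})"
proof -
  have "k_subsets X 1 = (\<lambda>i. {i}) ` X"
    unfolding k_subsets_def by (auto simp: card_1_singleton_iff)
  then show ?thesis by (simp add: sum.reindex inj_on_def)
qed

lemma sum_eq_sum_if_mem:
  assumes "finite X" "S \<subseteq> X"
  shows "sum c S = (\<Sum>j\<in>X. if j \<in> S then c j else 0)"
  using sum.inter_restrict[OF assms(1), of c S] assms(2) by (simp add: Int_absorb1)

lemma card_k_subsets_supersets_mem:
  assumes X: "finite X" and T: "T \<subseteq> X" "card T < k" "k \<le> card X" and j: "j \<in> X"
  shows "card {S\<in>k_subsets X k. T \<subseteq> S \<and> j \<in> S}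
       = (if j \<in> T then (card X - card T - 1) choose (k - card T) else 0)
         + ((card X - card T - 1) choose (k - card T - 1))"
proof (cases "j \<in> T")
  case True
  then have "{S\<in>k_subsets X k. T \<subseteq> S \<and> j \<in> S} = {S\<in>k_subsets X k. T \<subseteq> S}" by auto
  moreover obtain a b where "card X - card T = Suc a" "k - card T = Suc b"
    using T by (metis Suc_diff_Suc order.strict_trans2)
  ultimately show ?thesis using True card_k_subsets_supersets[OF X T(1)] T(2) by simp
next
  case False
  then have "{S\<in>k_subsets X k. T \<subseteq> S \<and> j \<in> S} = {S\<in>k_subsets X k. insert j T \<subseteq> S}" by auto
  moreover have "card (insert j T) = Suc (card T)" using False finite_subset[OF T(1) X] by simp
  ultimately show ?thesis using False card_k_subsets_supersets[OF X, of "insert j T" k] j T by simp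
qed

lemma down_sum:
  assumes X: "finite X" and T: "T \<subseteq> X" "card T < k" "k \<le> card X"
  shows "down X k (sum c) T = real ((card X - card T - 1) choose (k - card T)) * sum c T
       + real ((card X - card T - 1) choose (k - card T - 1)) * sum c X"
proof -
  define C1 where "C1 = (card X - card T - 1) choose (k - card T)"
  define C2 where "C2 = (card X - card T - 1) choose (k - card T - 1)"
  have "down X k (sum c) T
      = (\<Sum>S\<in>k_subsets X k. if T \<subseteq> S then (\<Sum>j\<in>X. if j \<in> S then c j else 0) else 0)"
    unfolding down_def by (intro sum.cong refl if_cong sum_eq_sum_if_mem[OF X]) (auto simp: k_subsets_def)
  also have "\<dots> = (\<Sum>j\<in>X. real (card {S\<in>k_subsets X k. T \<subseteq> S \<and> j \<in> S}) * c j)"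
    using X by (intro sum_if_sum_if_eq_sum_card) auto
  also have "\<dots> = (\<Sum>j\<in>X. real C1 * (if j \<in> T then c j else 0) + real C2 * c j)"
    using card_k_subsets_supersets_mem[OF X T] unfolding C1_def C2_def
    by (intro sum.cong refl) (simp add: algebra_simps)
  also have "\<dots> = real C1 * sum c T + real C2 * sum c X"
    by (simp add: sum.distrib sum_distrib_left sum_eq_sum_if_mem[OF X T(1)])
  finally show ?thesis unfolding C1_def C2_def .
qed

lemma up_sum:
  assumes X: "finite X" and S: "S \<subseteq> X" and r: "r \<ge> 1"
  shows "up X r (sum c) S = real ((card S - 1) choose (r - 1)) * sum c S"
proof -
  have fS: "finite S" using X S finite_subset by blast
  have "up X r (sum c) S
      = (\<Sum>T\<in>k_subsets X r. if T \<subseteq> S then (\<Sum>j\<in>X. if j \<in> T then c j else 0) else 0)"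
    unfolding up_def by (intro sum.cong refl if_cong sum_eq_sum_if_mem[OF X]) (auto simp: k_subsets_def)
  also have "\<dots> = (\<Sum>j\<in>X. real (card {T\<in>k_subsets X r. T \<subseteq> S \<and> j \<in> T}) * c j)"
    using X by (intro sum_if_sum_if_eq_sum_card) auto
  also have "\<dots> = (\<Sum>j\<in>X. real ((card S - 1) choose (r - 1)) * (if j \<in> S then c j else 0))"
  proof (intro sum.cong refl)
    fix j assume j: "j \<in> X"
    show "real (card {T\<in>k_subsets X r. T \<subseteq> S \<and> j \<in> T}) * c j
        = real ((card S - 1) choose (r - 1)) * (if j \<in> S then c j else 0)"
    proof (cases "j \<in> S")
      case True
      have "{T\<in>k_subsets X r. T \<subseteq> S \<and> j \<in> T} = {T\<in>k_subsets S r. {j} \<subseteq> T}"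
        using S unfolding k_subsets_def by auto
      then show ?thesis using True card_k_subsets_supersets[OF fS, of "{j}" r] r by simp
    next
      case False
      then have "{T\<in>k_subsets X r. T \<subseteq> S \<and> j \<in> T} = {}" by auto
      then have "card {T\<in>k_subsets X r. T \<subseteq> S \<and> j \<in> T} = 0" by (simp only: card.empty)
      then show ?thesis using False by simp
    qed
  qed
  also have "\<dots> = real ((card S - 1) choose (r - 1)) * sum c S"
    by (simp add: sum_distrib_left sum_eq_sum_if_mem[OF X S])
  finally show ?thesis .
qed

lemma up_down_sum:
  assumes X: "finite X" and S: "S \<in> k_subsets X w" and w: "2 \<le> w" "w \<le> card X"
  shows "up X (w - 1) (down X w (sum c)) S
       = (real w - 1) * (real (card X) - real w) * sum c S + real w * sum c X"
proof -
  have "up X (w - 1) (down X w (sum c)) S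
      = up X (w - 1) (\<lambda>T. (real (card X) - real w) * sum c T + sum c X) S"
  proof (rule up_cong)
    fix T assume "T \<in> k_subsets X (w - 1)"
    then show "down X w (sum c) T = (real (card X) - real w) * sum c T + sum c X"
      using down_sum[OF X, of T w c] k_subsetsD[OF X, of T "w - 1"] w by (simp add: of_nat_diff)
  qed
  also have "\<dots> = (real (card X) - real w) * up X (w - 1) (sum c) S + up X (w - 1) (\<lambda>_. sum c X) S"
    by (simp add: up_add up_scale)
  also have "\<dots> = (real w - 1) * (real (card X) - real w) * sum c S + real w * sum c X"
  proof -
    obtain m where m: "w = Suc (Suc m)" using w by (metis add_2_eq_Suc le_Suc_ex)
    show ?thesis
      using up_sum[OF X, of S "w - 1" c] up_const[OF X, of S "w - 1" "sum c X"] k_subsetsD[OF X S]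
      unfolding m by simp
  qed
  finally show ?thesis .
qed

lemma sum_up_down:
  assumes X: "finite X" and w: "1 \<le> w" "w \<le> card X"
  shows "(\<Sum>S\<in>k_subsets X w. up X (w - 1) (down X w f) S)
       = real w * (real (card X) - real w + 1) * (\<Sum>S\<in>k_subsets X w. f S)"
proof -
  have "(\<Sum>S\<in>k_subsets X w. up X (w - 1) (down X w f) S)
      = (\<Sum>T\<in>k_subsets X (w - 1). down X w f T * down X w (\<lambda>_. 1) T)"
    using up_down_adjoint[OF X, where r = "w - 1" and g = "down X w f" and k = w and h = "\<lambda>_. 1"]
    by simp
  also have "\<dots> = (\<Sum>T\<in>k_subsets X (w - 1). (real (card X) - real w + 1) * (1 * down X w f T))"
    using down_const[OF X] k_subsetsD[OF X] w by (intro sum.cong refl) (simp add: of_nat_diff)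
  also have "\<dots> = (real (card X) - real w + 1) * (\<Sum>S\<in>k_subsets X w. up X (w - 1) (\<lambda>_. 1) S * f S)"
    using up_down_adjoint[OF X, where r = "w - 1" and g = "\<lambda>_. 1" and k = w and h = f]
    by (simp add: sum_distrib_left[symmetric])
  also have "\<dots> = (real (card X) - real w + 1) * (real w * (\<Sum>S\<in>k_subsets X w. f S))"
  proof -
    have "w choose (w - 1) = w" using w by (cases w) auto
    then show ?thesis using up_const[OF X] k_subsetsD[OF X] by (simp add: sum_distrib_left)
  qed
  finally show ?thesis by (simp add: mult_ac)
qed

section \<open>Eigenfunctions for the second largest eigenvalue\<close>

lemma eigenfunction_sum_eq_0:
  assumes X: "finite X" and w: "1 \<le> w" "w \<le> card X"
    and f: "\<forall>S\<in>k_subsets X w. up X (w - 1) (down X w f) S = \<mu> * f S"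
    and \<mu>: "\<mu> \<noteq> real w * (real (card X) - real w + 1)"
  shows "(\<Sum>S\<in>k_subsets X w. f S) = 0"
proof -
  have "\<mu> * (\<Sum>S\<in>k_subsets X w. f S) = real w * (real (card X) - real w + 1) * (\<Sum>S\<in>k_subsets X w. f S)"
    using sum_up_down[OF X w, of f] f by (simp add: sum_distrib_left)
  then show ?thesis using \<mu> by simp
qed

text \<open>By \<open>down_sum\<close>, a linear function with vanishing total weight has star sums
  \<open>((|X| - 2) choose (w - 1)) * c i\<close>; this determines the weights c.\<close>
lemma exists_weights_star_sums_vanish:
  assumes X: "finite X" and w: "2 \<le> w" "w < card X" and f: "(\<Sum>S\<in>k_subsets X w. f S) = 0"
  obtains c where "sum c X = 0" "star_sums_vanish X w (\<lambda>S. f S - sum c S)"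
proof -
  define B where "B = real ((card X - 2) choose (w - 1))"
  have "B > 0" using w by (simp add: B_def)
  define c where "c i = down X w f {i} / B" for i
  have "(\<Sum>i\<in>X. down X w f {i}) = (\<Sum>T\<in>k_subsets X 1. 1 * down X w f T)"
    using sum_k_subsets_1[of "down X w f" X] by simp
  also have "\<dots> = (\<Sum>S\<in>k_subsets X w. up X 1 (\<lambda>_. 1) S * f S)"
    by (rule up_down_adjoint[OF X])
  also have "\<dots> = real w * (\<Sum>S\<in>k_subsets X w. f S)"
    using up_const[OF X] k_subsetsD[OF X] by (simp add: sum_distrib_left)
  finally have c0: "sum c X = 0" using f unfolding c_def by (simp add: sum_divide_distrib[symmetric])
  have "down X w (\<lambda>S. f S - sum c S) {i} = 0" if i: "i \<in> X" for i
  proof -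
    have "down X w (sum c) {i} = B * c i"
      using down_sum[OF X, of "{i}" w c] i w c0 by (simp add: B_def numeral_2_eq_2)
    moreover have "B * c i = down X w f {i}" using \<open>B > 0\<close> by (simp add: c_def)
    ultimately show ?thesis by (simp add: down_diff)
  qed
  then show thesis using that[OF c0] unfolding star_sums_vanish_def by blast
qed

lemma star_sums_vanish_eigen_eq_0:
  assumes X: "finite X" and w: "2 \<le> w" "2 * w \<le> card X" and h: "star_sums_vanish X w h"
    and eig: "\<forall>S\<in>k_subsets X w. up X (w - 1) (down X w h) S = \<mu> * h S"
    and \<mu>: "\<mu> > (real w - 2) * (real (card X) - real w - 1)"
  shows "\<forall>S\<in>k_subsets X w. h S = 0"
proof -
  have "sq_norm X (w - 1) (down X w h) = (\<Sum>S\<in>k_subsets X w. up X (w - 1) (down X w h) S * h S)"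
    unfolding sq_norm_def power2_eq_square by (rule up_down_adjoint[OF X])
  also have "\<dots> = \<mu> * sq_norm X w h"
    using eig unfolding sq_norm_def by (simp add: sum_distrib_left power2_eq_square mult.assoc)
  finally have "\<mu> * sq_norm X w h \<le> (real w - 2) * (real (card X) - real w - 1) * sq_norm X w h"
    using sq_norm_down_le[OF X w h] by simp
  then have "sq_norm X w h = 0"
    using \<mu> sq_norm_nonneg[of X w h] mult_strict_right_mono[OF \<mu>, of "sq_norm X w h"] by fastforce
  then show ?thesis unfolding sq_norm_def using X by (simp add: sum_nonneg_eq_0_iff)
qed

lemma eigenfunction_eq_sum_weights:
  assumes X: "finite X" and w: "2 \<le> w" "2 * w \<le> card X"
    and f: "\<forall>S\<in>k_subsets X w.
      up X (w - 1) (down X w f) S = (real w - 1) * (real (card X) - real w) * f S"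
  obtains c where "sum c X = 0" "\<forall>S\<in>k_subsets X w. f S = sum c S"
proof -
  have "(\<Sum>S\<in>k_subsets X w. f S) = 0"
    by (rule eigenfunction_sum_eq_0[OF X _ _ f]) (use w in \<open>auto simp: algebra_simps\<close>)
  moreover have "w < card X" "w \<le> card X" using w by linarith+
  ultimately obtain c where c: "sum c X = 0" and h: "star_sums_vanish X w (\<lambda>S. f S - sum c S)"
    using exists_weights_star_sums_vanish[OF X w(1)] by blast
  have eig: "up X (w - 1) (down X w (\<lambda>S. f S - sum c S)) S
      = (real w - 1) * (real (card X) - real w) * (f S - sum c S)" if S: "S \<in> k_subsets X w" for S
  proof -
    have "up X (w - 1) (down X w f) S = (real w - 1) * (real (card X) - real w) * f S"
      using f S by blast
    moreover have "up X (w - 1) (down X w (sum c)) S = (real w - 1) * (real (card X) - real w) * sum c S"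
      using up_down_sum[OF X S w(1) \<open>w \<le> card X\<close>, of c] c by simp
    ultimately show ?thesis by (simp add: down_diff up_diff algebra_simps)
  qed
  have "\<forall>S\<in>k_subsets X w. f S - sum c S = 0"
  proof (rule star_sums_vanish_eigen_eq_0[OF X w h])
    show "\<forall>S\<in>k_subsets X w. up X (w - 1) (down X w (\<lambda>S. f S - sum c S)) S
        = (real w - 1) * (real (card X) - real w) * (f S - sum c S)"
      using eig by blast
    show "(real w - 1) * (real (card X) - real w) > (real w - 2) * (real (card X) - real w - 1)"
      using w by (simp add: algebra_simps)
  qed
  then show thesis using that[OF c] by simp
qed

lemma johnson_vertices_eq_k_subsets: "johnson_vertices n w = k_subsets {1..n} w"
  unfolding johnson_vertices_def k_subsets_def ..

lemma up_down_eq_johnson: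
  assumes X: "finite X" and S: "S \<in> k_subsets X w" and w: "w \<ge> 1"
  shows "up X (w - 1) (down X w h) S
       = real w * h S + (\<Sum>S'\<in>{S'\<in>k_subsets X w. card (S \<inter> S') = w - 1}. h S')"
proof -
  have "up X (w - 1) (down X w h) S = (\<Sum>S'\<in>k_subsets X w.
      (if S' = S then real w * h S' else 0) + (if card (S \<inter> S') = w - 1 then h S' else 0))"
    unfolding up_down_eq[OF X k_subsetsD(1)[OF X S]]
  proof (intro sum.cong refl)
    fix S' assume S': "S' \<in> k_subsets X w"
    show "real (card (S \<inter> S') choose (w - 1)) * h S'
        = (if S' = S then real w * h S' else 0) + (if card (S \<inter> S') = w - 1 then h S' else 0)"
    proof (cases "S' = S")
      case True
      moreover have "w choose (w - 1) = w" using w by (cases w) auto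
      moreover have "w - 1 \<noteq> w" using w by simp
      ultimately show ?thesis using k_subsetsD[OF X S] by simp
    next
      case False
      then have "card (S \<inter> S') < w"
        using card_Int_less[of S S'] k_subsetsD[OF X S] k_subsetsD[OF X S'] by auto
      then show ?thesis using False by (cases "card (S \<inter> S') = w - 1") auto
    qed
  qed
  also have "\<dots> = real w * h S + (\<Sum>S'\<in>{S'\<in>k_subsets X w. card (S \<inter> S') = w - 1}. h S')"
    using S X by (simp add: sum.distrib sum.inter_filter)
  finally show ?thesis .
qed

lemma lambda1_eigenfunction_up_down:
  assumes "is_eigenfunction n w (lambda1 n w) f" "w \<ge> 1"
  shows "\<forall>S\<in>k_subsets {1..n} w.
    up {1..n} (w - 1) (down {1..n} w f) S = (real w - 1) * (real n - real w) * f S"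
  using assms up_down_eq_johnson[of "{1..n}" _ w f]
  unfolding is_eigenfunction_def johnson_vertices_eq_k_subsets johnson_adj_def lambda1_def
  by (auto simp: algebra_simps)

section \<open>The standard eigenfunctions\<close>

definition standard_form :: "nat \<Rightarrow> nat \<Rightarrow> (nat set \<Rightarrow> real) \<Rightarrow> bool" where
  "standard_form n w f \<longleftrightarrow> (\<exists>\<kappa>::real. \<kappa> \<noteq> 0 \<and>
     (equivalent_fun n w (\<lambda>x. \<kappa> * f x) f1
      \<or> (n = 2 * w \<and> equivalent_fun n w (\<lambda>x. \<kappa> * f x) f2)
      \<or> (n = 2 * w \<and> equivalent_fun n w (\<lambda>x. \<kappa> * f x) f3)
      \<or> (w = 2 \<and> even n \<and> equivalent_fun n w (\<lambda>x. \<kappa> * f x) (f4 n))))"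

lemma standard_form_cong:
  assumes "\<forall>S\<in>k_subsets {1..n} w. f S = g S"
  shows "standard_form n w f \<longleftrightarrow> standard_form n w g"
proof -
  have "equivalent_fun n w (\<lambda>x. \<kappa> * f x) = equivalent_fun n w (\<lambda>x. \<kappa> * g x)" for \<kappa>
    using assms unfolding equivalent_fun_def johnson_vertices_eq_k_subsets by (intro ext) auto
  then show ?thesis unfolding standard_form_def by simp
qed

lemma equivalent_funI:
  assumes "\<pi> permutes {1..n}" "\<forall>S\<in>k_subsets {1..n} w. g1 S = g2 (\<pi> ` S)"
  shows "equivalent_fun n w g1 g2"
  using assms unfolding equivalent_fun_def johnson_vertices_eq_k_subsets by blast

lemma exists_permutes_extending:
  assumes X: "finite X" and A: "A \<subseteq> X" and B: "B \<subseteq> X" and h: "bij_betw h A B"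
  obtains \<pi> where "\<pi> permutes X" "\<forall>x\<in>A. \<pi> x = h x"
proof -
  have "card (X - A) = card (X - B)"
    using bij_betw_same_card[OF h] A B X by (simp add: card_Diff_subset finite_subset)
  then obtain g where g: "bij_betw g (X - A) (X - B)" using X finite_same_card_bij by blast
  define \<pi> where "\<pi> x = (if x \<in> A then h x else if x \<in> X then g x else x)" for x
  have "bij_betw \<pi> A B" using h unfolding \<pi>_def by (rule bij_betw_cong[THEN iffD1, rotated]) auto
  moreover have "bij_betw \<pi> (X - A) (X - B)"
    using g unfolding \<pi>_def by (rule bij_betw_cong[THEN iffD1, rotated]) auto
  ultimately have "bij_betw \<pi> (A \<union> (X - A)) (B \<union> (X - B))" by (rule bij_betw_combine) auto
  then have "bij_betw \<pi> X X" using A B by (simp add: Un_absorb1 Un_Diff_cancel)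
  then have "\<pi> permutes X" by (rule bij_imp_permutes) (use A in \<open>auto simp: \<pi>_def\<close>)
  then show thesis using that unfolding \<pi>_def by auto
qed

lemma exists_permutes_image:
  assumes X: "finite X" and A: "A \<subseteq> X" and B: "B \<subseteq> X" and card: "card A = card B"
  obtains \<pi> where "\<pi> permutes X" "\<pi> ` A = B"
proof -
  obtain h where h: "bij_betw h A B"
    using finite_same_card_bij[OF _ _ card] X A B finite_subset by blast
  then obtain \<pi> where \<pi>: "\<pi> permutes X" "\<forall>x\<in>A. \<pi> x = h x"
    using exists_permutes_extending[OF X A B] by blast
  have "\<pi> ` A = h ` A" using \<pi>(2) by (intro image_cong) auto
  then show thesis using that[OF \<pi>(1)] h by (simp add: bij_betw_def)
qed

lemma card_Int_image_permutes:
  assumes "\<pi> permutes X"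
  shows "card (\<pi> ` S \<inter> \<pi> ` A) = card (S \<inter> A)"
  using permutes_inj[OF assms] by (simp add: image_Int[symmetric] card_image inj_on_subset)

lemma f2_eq_card_Int: "f2 T = real (card (T \<inter> {1, 2})) - 1"
proof -
  have "T \<inter> {1, 2} = (if 1 \<in> T then {1} else {}) \<union> (if 2 \<in> T then {2::nat} else {})" by auto
  then show ?thesis unfolding f2_def by (auto simp: card_insert_if)
qed

lemma f4_eq_card_Int:
  assumes T: "T \<subseteq> {1..n}" "card T = 2"
  shows "f4 n T = real (card (T \<inter> {1..n div 2})) - 1"
proof -
  let ?P = "{1..n div 2}"
  have fin: "finite T" using T(2) card.infinite by fastforce
  have "card (T \<inter> ?P) \<le> 2" using T(2) card_mono[OF fin, of "T \<inter> ?P"] by simp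
  moreover have "T \<subseteq> ?P \<longleftrightarrow> card (T \<inter> ?P) = 2"
  proof
    assume "card (T \<inter> ?P) = 2"
    then have "T \<inter> ?P = T" using T(2) by (intro card_subset_eq[OF fin]) auto
    then show "T \<subseteq> ?P" by blast
  qed (use T(2) in \<open>simp add: Int_absorb2\<close>)
  moreover have "T \<subseteq> {n div 2 + 1..n} \<longleftrightarrow> T \<inter> ?P = {}"
    using T(1) by (auto simp: disjoint_iff subset_iff)
  moreover have "T \<inter> ?P = {} \<longleftrightarrow> card (T \<inter> ?P) = 0" using fin by simp
  ultimately show ?thesis unfolding f4_def by (auto simp: numeral_2_eq_2 le_Suc_eq)
qed

lemma standard_form_f1I:
  assumes ab: "a \<in> {1..n}" "b \<in> {1..n}" "a \<noteq> b" and \<kappa>: "\<kappa> \<noteq> 0"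
    and f: "\<forall>S\<in>k_subsets {1..n} w. \<kappa> * f S = of_bool (a \<in> S) - of_bool (b \<in> S)"
  shows "standard_form n w f"
proof -
  have "bij_betw (\<lambda>x. if x = a then 1 else 2) {a, b} {1, 2::nat}"
    using ab(3) by (auto simp: bij_betw_def inj_on_def)
  moreover have "{a, b} \<subseteq> {1..n}" "{1, 2} \<subseteq> {1..n}" using ab by auto
  ultimately obtain \<pi> where \<pi>: "\<pi> permutes {1..n}" "\<forall>x\<in>{a, b}. \<pi> x = (if x = a then 1 else 2)"
    using exists_permutes_extending[of "{1..n}" "{a, b}" "{1, 2}"] by blast
  then have "\<pi> a = 1" "\<pi> b = 2" using ab(3) by auto
  then have "1 \<in> \<pi> ` S \<longleftrightarrow> a \<in> S" "2 \<in> \<pi> ` S \<longleftrightarrow> b \<in> S" for S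
    using inj_image_mem_iff[OF permutes_inj[OF \<pi>(1)]] by metis+
  then have "equivalent_fun n w (\<lambda>x. \<kappa> * f x) f1"
    using f by (intro equivalent_funI[OF \<pi>(1)]) (auto simp: f1_def)
  then show ?thesis using \<kappa> unfolding standard_form_def by blast
qed

lemma standard_form_f3I:
  assumes n: "n = 2 * w" and a: "a \<in> {1..n}" and \<kappa>: "\<kappa> \<noteq> 0"
    and f: "\<forall>S\<in>k_subsets {1..n} w. \<kappa> * f S = 2 * of_bool (a \<in> S) - 1"
  shows "standard_form n w f"
proof -
  obtain \<pi> where \<pi>: "\<pi> permutes {1..n}" "\<pi> ` {a} = {1}"
    using exists_permutes_image[of "{1..n}" "{a}" "{1}"] a by auto
  have "1 \<in> \<pi> ` S \<longleftrightarrow> a \<in> S" for S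
    using inj_image_mem_iff[OF permutes_inj[OF \<pi>(1)], of a S] \<pi>(2) by simp
  then have "equivalent_fun n w (\<lambda>x. \<kappa> * f x) f3"
    using f by (intro equivalent_funI[OF \<pi>(1)]) (auto simp: f3_def)
  then show ?thesis using n \<kappa> unfolding standard_form_def by blast
qed

lemma standard_form_f2I:
  assumes n: "n = 2 * w" and A: "A \<subseteq> {1..n}" "card A = 2" and \<kappa>: "\<kappa> \<noteq> 0"
    and f: "\<forall>S\<in>k_subsets {1..n} w. \<kappa> * f S = real (card (S \<inter> A)) - 1"
  shows "standard_form n w f"
proof -
  have "2 \<le> n" using card_mono[of "{1..n}" A] A by simp
  then have "{1, 2} \<subseteq> {1..n}" by auto
  then obtain \<pi> where \<pi>: "\<pi> permutes {1..n}" "\<pi> ` A = {1, 2}"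
    using exists_permutes_image[of "{1..n}" A "{1, 2}"] A by auto
  have "equivalent_fun n w (\<lambda>x. \<kappa> * f x) f2"
    using f card_Int_image_permutes[OF \<pi>(1), of _ A, unfolded \<pi>(2)]
    by (intro equivalent_funI[OF \<pi>(1)]) (simp add: f2_eq_card_Int)
  then show ?thesis using n \<kappa> unfolding standard_form_def by blast
qed

lemma standard_form_f4I:
  assumes w: "w = 2" and A: "A \<subseteq> {1..n}" "n = 2 * card A" and \<kappa>: "\<kappa> \<noteq> 0"
    and f: "\<forall>S\<in>k_subsets {1..n} w. \<kappa> * f S = real (card (S \<inter> A)) - 1"
  shows "standard_form n w f"
proof -
  obtain \<pi> where \<pi>: "\<pi> permutes {1..n}" "\<pi> ` A = {1..n div 2}"
  proof (rule exists_permutes_image)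
    show "card A = card {1..n div 2}" using A(2) by simp
  qed (use A(1) in auto)
  have "equivalent_fun n w (\<lambda>x. \<kappa> * f x) (f4 n)"
  proof (rule equivalent_funI[OF \<pi>(1)], intro ballI)
    fix S assume S: "S \<in> k_subsets {1..n} w"
    then have "\<pi> ` S \<subseteq> \<pi> ` {1..n}" by (intro image_mono) (simp add: k_subsets_def)
    then have "\<pi> ` S \<subseteq> {1..n}" by (simp only: permutes_image[OF \<pi>(1)])
    moreover have "card (\<pi> ` S) = 2"
      using card_image[OF permutes_inj_on[OF \<pi>(1)], of S] S w by (simp add: k_subsets_def)
    ultimately show "\<kappa> * f S = f4 n (\<pi> ` S)"
      using f S card_Int_image_permutes[OF \<pi>(1), of S A] \<pi>(2) by (simp add: f4_eq_card_Int)
  qed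
  moreover have "even n" using A(2) by simp
  ultimately show ?thesis using w \<kappa> unfolding standard_form_def by blast
qed

section \<open>Functions S \<mapsto> \<Sum>i\<in>S. c i with values in {-1, 0, 1}\<close>

lemma sum_insert_Diff:
  fixes c :: "'a \<Rightarrow> real"
  assumes "finite S" "x \<in> S" "y \<notin> S"
  shows "sum c (insert y (S - {x})) = sum c S - c x + c y"
proof -
  have "sum c (insert y (S - {x})) = c y + sum c (S - {x})" using assms by simp
  then show ?thesis using sum.remove[OF assms(1,2), of c] by linarith
qed

lemma insert_Diff_mem_k_subsets:
  assumes "finite X" "S \<in> k_subsets X k" "x \<in> S" "y \<in> X - S"
  shows "insert y (S - {x}) \<in> k_subsets X k"
proof -
  have "finite S" "card S \<ge> 1" using k_subsetsD[OF assms(1,2)] assms(3) card_0_eq by fastforce+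
  then show ?thesis using assms k_subsetsD[OF assms(1,2)] by (auto simp: k_subsets_def)
qed

lemma sum_eq_const_off_two:
  assumes "finite S" "a \<noteq> b" "\<forall>i\<in>S - {a, b}. c i = t"
  shows "sum c S = real (card S) * t + (if a \<in> S then c a - t else 0) + (if b \<in> S then c b - t else 0)"
proof -
  have "(\<Sum>i\<in>S. c i - t) = (\<Sum>i\<in>S. (if i = a then c a - t else 0) + (if i = b then c b - t else 0))"
    using assms by (intro sum.cong refl) auto
  then show ?thesis using assms(1) by (simp add: sum.distrib sum_subtractf)
qed

lemma two_valued_parameter_cases:
  fixes k \<alpha> n w :: nat
  assumes "w \<ge> 2" "2 * w \<le> n" "\<alpha> \<le> n" "k \<le> w" "k \<le> \<alpha>" "w * \<alpha> = n * (k + 1)"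
    and "k = 0 \<or> n - \<alpha> = w - k" and "k + 2 = w \<or> \<alpha> = k + 2"
  shows "(k = 0 \<and> \<alpha> = 2 \<and> n = 2 * w) \<or> (k = 0 \<and> w = 2 \<and> n = 2 * \<alpha>)
    \<or> (n = 2 * w \<and> \<alpha> + 2 = n \<and> k + 2 = w)"
proof -
  consider "k = 0" "k + 2 = w" | "k = 0" "\<alpha> = k + 2" | "n - \<alpha> = w - k" "\<alpha> = k + 2"
    | "n - \<alpha> = w - k" "k + 2 = w"
    using assms by blast
  then show ?thesis
  proof cases
    case 1
    then show ?thesis using assms by auto
  next
    case 2
    then show ?thesis using assms by auto
  next
    case 3
    then have "w = 2" "n = 4" using assms by auto
    then show ?thesis using 3 assms by auto
  next
    case 4
    then have n: "n = \<alpha> + 2" and w: "w = k + 2" using assms by auto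
    have "(k + 2) * \<alpha> = (\<alpha> + 2) * (k + 1)" using assms(6) unfolding n w by simp
    then have "\<alpha> = 2 * k + 2" by (simp add: algebra_simps)
    then show ?thesis using n w by auto
  qed
qed

lemma sum_two_valued:
  fixes c :: "'a \<Rightarrow> real"
  assumes "finite S" "\<forall>i\<in>S. c i = q + of_bool (i \<in> A)"
  shows "sum c S = real (card S) * q + real (card (S \<inter> A))"
proof -
  have "sum c S = (\<Sum>i\<in>S. q + of_bool (i \<in> A))" using assms(2) by (intro sum.cong) auto
  then show ?thesis using assms(1) by (simp add: sum.distrib)
qed

locale ternary_sum_fun =
  fixes n w :: nat and c :: "nat \<Rightarrow> real"
  assumes w_ge_2: "2 \<le> w" and n_ge: "2 * w \<le> n"
    and sum_weights: "sum c {1..n} = 0"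
    and ternary: "\<And>S. S \<in> k_subsets {1..n} w \<Longrightarrow> sum c S \<in> {-1, 0, 1}"
    and nonzero: "\<exists>S\<in>k_subsets {1..n} w. sum c S \<noteq> 0"
begin

lemma obtain_k_subset_avoiding:
  assumes "F \<subseteq> {1..n}" "k + card F \<le> n"
  obtains R where "R \<subseteq> {1..n} - F" "card R = k" "finite R"
proof -
  have "card ({1..n} - F) = n - card F"
    using assms(1) by (simp add: card_Diff_subset finite_subset)
  then have "k \<le> card ({1..n} - F)" using assms(2) by simp
  then show thesis using obtain_subset_with_card_n that by blast
qed

lemma insert_mem_vertices:
  assumes "R \<subseteq> {1..n}" "i \<in> {1..n} - R" "card R = w - 1"
  shows "insert i R \<in> k_subsets {1..n} w"
  using assms w_ge_2 finite_subset[OF assms(1)] by (auto simp: k_subsets_def)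

lemma weight_diff_mem:
  assumes i: "i \<in> {1..n}" and j: "j \<in> {1..n}"
  shows "c i - c j \<in> {-2, -1, 0, 1, 2}"
proof (cases "i = j")
  case False
  obtain R where R: "R \<subseteq> {1..n} - {i, j}" "card R = w - 1" "finite R"
    using obtain_k_subset_avoiding[of "{i, j}" "w - 1"] i j False n_ge w_ge_2 by auto
  have notin: "i \<notin> R" "j \<notin> R" using R(1) by auto
  have "insert i R \<in> k_subsets {1..n} w" "insert j R \<in> k_subsets {1..n} w"
    using i j R by (intro insert_mem_vertices; auto)+
  then have "sum c (insert i R) \<in> {-1, 0, 1}" "sum c (insert j R) \<in> {-1, 0, 1}"
    using ternary by blast+
  moreover have "c i - c j = sum c (insert i R) - sum c (insert j R)" using notin R(3) by simp
  ultimately show ?thesis by auto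
qed simp

lemma weights_not_constant:
  assumes "\<forall>i\<in>{1..n}. c i = t"
  shows False
proof -
  have "real n * t = 0" using sum_weights assms by simp
  then have "t = 0" using n_ge w_ge_2 by simp
  then have "sum c S = 0" if "S \<in> k_subsets {1..n} w" for S
    using that assms by (auto simp: k_subsets_def intro!: sum.neutral)
  then show False using nonzero by blast
qed

lemma sum_over_vertices: "(\<Sum>S\<in>k_subsets {1..n} w. sum c S) = 0"
proof -
  have "(\<Sum>S\<in>k_subsets {1..n} w. sum c S) = down {1..n} w (sum c) {}"
    unfolding down_def by simp
  also have "\<dots> = 0" using down_sum[of "{1..n}" "{}" w c] sum_weights w_ge_2 n_ge by simp
  finally show ?thesis .
qed

lemma exists_sum_eq_1: "\<exists>S\<in>k_subsets {1..n} w. sum c S = 1"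
proof (rule ccontr)
  assume "\<not> ?thesis"
  then have "0 \<le> - sum c S" if "S \<in> k_subsets {1..n} w" for S using ternary[OF that] that by auto
  moreover have "(\<Sum>S\<in>k_subsets {1..n} w. - sum c S) = 0"
    using sum_over_vertices by (simp add: sum_negf)
  ultimately have "\<forall>S\<in>k_subsets {1..n} w. - sum c S = 0"
    using sum_nonneg_eq_0_iff[of "k_subsets {1..n} w" "\<lambda>S. - sum c S"] by simp
  then show False using nonzero by simp
qed

lemma exists_sum_eq_neg_1: "\<exists>S\<in>k_subsets {1..n} w. sum c S = -1"
proof (rule ccontr)
  assume "\<not> ?thesis"
  then have "0 \<le> sum c S" if "S \<in> k_subsets {1..n} w" for S using ternary[OF that] that by auto
  then have "\<forall>S\<in>k_subsets {1..n} w. sum c S = 0"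
    using sum_over_vertices sum_nonneg_eq_0_iff[of "k_subsets {1..n} w" "sum c"] by simp
  then show False using nonzero by simp
qed

lemma weight_le_of_sum_eq_1:
  assumes "S \<in> k_subsets {1..n} w" "sum c S = 1" "x \<in> S" "y \<in> {1..n} - S"
  shows "c y \<le> c x"
proof -
  have "insert y (S - {x}) \<in> k_subsets {1..n} w" by (rule insert_Diff_mem_k_subsets) (use assms in auto)
  then have "sum c (insert y (S - {x})) \<in> {-1, 0, 1}" by (rule ternary)
  moreover have "sum c (insert y (S - {x})) = sum c S - c x + c y"
    by (rule sum_insert_Diff) (use k_subsetsD(3)[OF _ assms(1)] assms(3,4) in auto)
  ultimately show ?thesis using assms(2) by auto
qed

lemma weight_le_of_sum_eq_neg_1:
  assumes "S \<in> k_subsets {1..n} w" "sum c S = -1" "x \<in> S" "y \<in> {1..n} - S"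
  shows "c x \<le> c y"
proof -
  have "insert y (S - {x}) \<in> k_subsets {1..n} w" by (rule insert_Diff_mem_k_subsets) (use assms in auto)
  then have "sum c (insert y (S - {x})) \<in> {-1, 0, 1}" by (rule ternary)
  moreover have "sum c (insert y (S - {x})) = sum c S - c x + c y"
    by (rule sum_insert_Diff) (use k_subsetsD(3)[OF _ assms(1)] assms(3,4) in auto)
  ultimately show ?thesis using assms(2) by auto
qed

lemma weight_gap_2_sum:
  assumes a: "a \<in> {1..n}" and b: "b \<in> {1..n}" and d: "c a - c b = 2"
    and R: "R \<subseteq> {1..n} - {a, b}" "card R = w - 1"
  shows "sum c R = 1 - c a"
proof -
  have notin: "a \<notin> R" "b \<notin> R" using R(1) by auto
  have "insert a R \<in> k_subsets {1..n} w" "insert b R \<in> k_subsets {1..n} w"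
    using a b R by (intro insert_mem_vertices; auto)+
  then have "sum c (insert a R) \<in> {-1, 0, 1}" "sum c (insert b R) \<in> {-1, 0, 1}"
    using ternary by blast+
  moreover have "sum c (insert a R) = c a + sum c R" "sum c (insert b R) = c b + sum c R"
    using notin finite_subset[OF R(1)] by simp_all
  ultimately show ?thesis using d by auto
qed

lemma weight_gap_2_weights_eq:
  assumes a: "a \<in> {1..n}" and b: "b \<in> {1..n}" and d: "c a - c b = 2"
    and i: "i \<in> {1..n} - {a, b}" and j: "j \<in> {1..n} - {a, b}"
  shows "c i = c j"
proof (cases "i = j")
  case False
  have "card {a, b, i, j} = 4" using i j False d by (auto simp: card_insert_if)
  then obtain R where R: "R \<subseteq> {1..n} - {a, b, i, j}" "card R = w - 2" "finite R"
    using obtain_k_subset_avoiding[of "{a, b, i, j}" "w - 2"] a b i j n_ge w_ge_2 by auto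
  then have notin: "i \<notin> R" "j \<notin> R" by auto
  have "insert i R \<subseteq> {1..n} - {a, b}" "insert j R \<subseteq> {1..n} - {a, b}"
    using R(1) i j by auto
  moreover have "card (insert i R) = w - 1" "card (insert j R) = w - 1"
    using notin R(2,3) w_ge_2 by simp_all
  ultimately have "c i + sum c R = c j + sum c R"
    using weight_gap_2_sum[OF a b d] notin R(3) by (metis sum.insert)
  then show ?thesis by simp
qed simp

lemma weight_gap_2_form:
  assumes a: "a \<in> {1..n}" and b: "b \<in> {1..n}" and d: "c a - c b = 2"
  obtains t where
    "\<forall>S\<in>k_subsets {1..n} w.
      sum c S = real w * t + (if a \<in> S then c a - t else 0) + (if b \<in> S then c b - t else 0)"
    "(real w - 1) * t = 1 - c a" "(real n - 2 * real w) * t = 0" "real w * t \<in> {-1, 0, 1}"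
proof -
  have ab: "a \<noteq> b" using d by auto
  obtain S0 where S0: "S0 \<subseteq> {1..n} - {a, b}" "card S0 = w" "finite S0"
    using obtain_k_subset_avoiding[of "{a, b}" w] a b ab n_ge w_ge_2 by auto
  moreover have "S0 \<noteq> {}" using S0(2) w_ge_2 by auto
  ultimately obtain i0 where i0: "i0 \<in> {1..n} - {a, b}" by blast
  define t where "t = c i0"
  have t: "\<forall>i\<in>{1..n} - {a, b}. c i = t"
    using weight_gap_2_weights_eq[OF a b d _ i0] unfolding t_def by blast
  have form: "sum c S = real w * t + (if a \<in> S then c a - t else 0) + (if b \<in> S then c b - t else 0)"
    if "S \<in> k_subsets {1..n} w" for S
  proof -
    have S: "S \<subseteq> {1..n}" "card S = w" "finite S" using k_subsetsD[OF _ that] by auto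
    then have "\<forall>i\<in>S - {a, b}. c i = t" using t by blast
    then show ?thesis using sum_eq_const_off_two[of S a b c t] ab S by simp
  qed
  obtain R where R: "R \<subseteq> {1..n} - {a, b}" "card R = w - 1" "finite R"
    using obtain_k_subset_avoiding[of "{a, b}" "w - 1"] a b ab n_ge w_ge_2 by auto
  have "sum c R = (\<Sum>i\<in>R. t)" using t R(1) by (intro sum.cong refl) blast
  then have "sum c R = real (w - 1) * t" using R(2) by simp
  then have e1: "(real w - 1) * t = 1 - c a" using weight_gap_2_sum[OF a b d R(1,2)] w_ge_2 by simp
  have "sum c {1..n} = real n * t + (c a - t) + (c b - t)"
    using sum_eq_const_off_two[of "{1..n}" a b c t] ab t a b by simp
  then have e2: "c a + c b + (real n - 2) * t = 0" using sum_weights by (simp add: algebra_simps)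
  have "(real n - 2 * real w) * t
      = (c a + c b + (real n - 2) * t) + (c a - c b - 2) - 2 * (c a - 1 + (real w - 1) * t)"
    by (simp add: algebra_simps)
  then have e3: "(real n - 2 * real w) * t = 0" using e1 e2 d by simp
  have S0_mem: "S0 \<in> k_subsets {1..n} w" using S0 by (auto simp: k_subsets_def)
  have "a \<notin> S0" "b \<notin> S0" using S0(1) by auto
  then have "sum c S0 = real w * t" using form[OF S0_mem] by simp
  then have "real w * t \<in> {-1, 0, 1}" using ternary[OF S0_mem] by simp
  then show thesis using that form e1 e3 by blast
qed

lemma weight_gap_2_standard_form:
  assumes a: "a \<in> {1..n}" and b: "b \<in> {1..n}" and d: "c a - c b = 2"
  shows "standard_form n w (sum c)"
proof -
  obtain t where form: "\<forall>S\<in>k_subsets {1..n} w.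
      sum c S = real w * t + (if a \<in> S then c a - t else 0) + (if b \<in> S then c b - t else 0)"
    and e1: "(real w - 1) * t = 1 - c a" and e2: "(real n - 2 * real w) * t = 0"
    and wt: "real w * t \<in> {-1, 0, 1}"
    using weight_gap_2_form[OF a b d] by blast
  show ?thesis
  proof (cases "t = 0")
    case True
    then have "c a = 1" "c b = -1" using e1 d by auto
    then have "\<forall>S\<in>k_subsets {1..n} w. 1 * sum c S = of_bool (a \<in> S) - of_bool (b \<in> S)"
      using form True by (simp add: of_bool_def)
    moreover have "a \<noteq> b" using d by auto
    ultimately show ?thesis using standard_form_f1I[OF a b _ one_neq_zero] by blast
  next
    case False
    then have n: "n = 2 * w" using e2 by simp
    consider "real w * t = 1" | "real w * t = -1" using wt False w_ge_2 by auto
    then show ?thesis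
    proof cases
      case 1
      then have "c a = t" "c b = t - 2" using e1 d by (auto simp: algebra_simps)
      then have "\<forall>S\<in>k_subsets {1..n} w. -1 * sum c S = 2 * of_bool (b \<in> S) - 1"
        using form 1 by (simp add: of_bool_def)
      then show ?thesis by (rule standard_form_f3I[OF n b, rotated]) simp
    next
      case 2
      then have "c a = t + 2" "c b = t" using e1 d by (auto simp: algebra_simps)
      then have "\<forall>S\<in>k_subsets {1..n} w. 1 * sum c S = 2 * of_bool (a \<in> S) - 1"
        using form 2 by (simp add: of_bool_def)
      then show ?thesis by (rule standard_form_f3I[OF n a one_neq_zero])
    qed
  qed
qed

lemma two_valued_card_Int_of_sum_eq_neg_1:
  assumes A: "A \<subseteq> {1..n}" and c_eq: "\<forall>i\<in>{1..n}. c i = q + of_bool (i \<in> A)"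
    and S: "S \<in> k_subsets {1..n} w" "sum c S = -1"
  shows "card (S \<inter> A) = 0 \<or> n - card A = w - card (S \<inter> A)"
proof -
  note S' = k_subsetsD[OF finite_atLeastAtMost S(1)]
  have "S \<inter> A = {} \<or> {1..n} - A \<subseteq> S"
  proof (rule ccontr)
    assume "\<not> ?thesis"
    then obtain x y where xy: "x \<in> S \<inter> A" "y \<in> {1..n} - A" "y \<notin> S" by blast
    then have "c x \<le> c y" using weight_le_of_sum_eq_neg_1[OF S] by blast
    then show False using xy c_eq A by auto
  qed
  then show ?thesis
  proof
    assume "{1..n} - A \<subseteq> S"
    then have "S - A = {1..n} - A" using S'(1) by blast
    moreover have "card (S - A) = w - card (S \<inter> A)" using card_Int_Diff[OF S'(3), of A] S'(2) by simp
    ultimately show ?thesis using card_Diff_subset[OF finite_subset[OF A] A] by simp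
  qed simp
qed

lemma two_valued_card_Int_of_sum_eq_1:
  assumes A: "A \<subseteq> {1..n}" and c_eq: "\<forall>i\<in>{1..n}. c i = q + of_bool (i \<in> A)"
    and S: "S \<in> k_subsets {1..n} w" "sum c S = 1"
  shows "card (S \<inter> A) = w \<or> card (S \<inter> A) = card A"
proof -
  note S' = k_subsetsD[OF finite_atLeastAtMost S(1)]
  have "S \<subseteq> A \<or> A \<subseteq> S"
  proof (rule ccontr)
    assume "\<not> ?thesis"
    then obtain x y where xy: "x \<in> S - A" "y \<in> A - S" by blast
    then have "c y \<le> c x" using weight_le_of_sum_eq_1[OF S] A by blast
    moreover have "c x = q" "c y = q + 1" using xy S'(1) c_eq A by auto
    ultimately show False by simp
  qed
  then show ?thesis using S'(2) by (auto simp: Int_absorb1 Int_absorb2)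
qed

text \<open>Here k is |S \<inter> A| for a w-set S on which the function takes the value -1.\<close>
lemma two_valued_parameters:
  assumes A: "A \<subseteq> {1..n}" and c_eq: "\<forall>i\<in>{1..n}. c i = q + of_bool (i \<in> A)"
  obtains k where "real w * q + real k = -1"
    "(k = 0 \<and> card A = 2 \<and> n = 2 * w) \<or> (k = 0 \<and> w = 2 \<and> n = 2 * card A)
      \<or> (n = 2 * w \<and> card A + 2 = n \<and> k + 2 = w)"
proof -
  have sum_eq: "sum c S = real (card S) * q + real (card (S \<inter> A))" if "S \<subseteq> {1..n}" for S
    by (rule sum_two_valued) (use that c_eq finite_subset[OF that] in auto)
  define \<alpha> where "\<alpha> = card A"
  have "real n * q + real \<alpha> = 0"
    using sum_eq[of "{1..n}"] sum_weights A unfolding \<alpha>_def by (simp add: Int_absorb1)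
  obtain S1 where S1: "S1 \<in> k_subsets {1..n} w" "sum c S1 = 1" using exists_sum_eq_1 by blast
  obtain S2 where S2: "S2 \<in> k_subsets {1..n} w" "sum c S2 = -1" using exists_sum_eq_neg_1 by blast
  note S1' = k_subsetsD[OF finite_atLeastAtMost S1(1)] and S2' = k_subsetsD[OF finite_atLeastAtMost S2(1)]
  define k where "k = card (S2 \<inter> A)"
  have hk: "real w * q + real k = -1" using sum_eq[OF S2'(1)] S2(2) S2'(2) unfolding k_def by simp
  have "real (card (S1 \<inter> A)) = real k + 2" using sum_eq[OF S1'(1)] S1(2) S1'(2) hk by simp
  then have h1: "card (S1 \<inter> A) = k + 2" by linarith
  have "real w * real \<alpha> = real n * (- (real w * q))"
    using \<open>real n * q + real \<alpha> = 0\<close> by (simp add: algebra_simps eq_neg_iff_add_eq_0[symmetric])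
  also have "- (real w * q) = real k + 1" using hk by linarith
  finally have "real (w * \<alpha>) = real (n * (k + 1))" by (simp add: algebra_simps)
  then have wa: "w * \<alpha> = n * (k + 1)" by (simp only: of_nat_eq_iff)
  have N1: "k = 0 \<or> n - \<alpha> = w - k"
    using two_valued_card_Int_of_sum_eq_neg_1[OF A c_eq S2] unfolding k_def \<alpha>_def .
  have N2: "k + 2 = w \<or> \<alpha> = k + 2"
    using two_valued_card_Int_of_sum_eq_1[OF A c_eq S1] h1 unfolding \<alpha>_def by auto
  have "\<alpha> \<le> n" using card_mono[OF finite_atLeastAtMost A] unfolding \<alpha>_def by simp
  moreover have "k \<le> w" "k \<le> \<alpha>"
    using card_mono[OF S2'(3), of "S2 \<inter> A"] card_mono[OF finite_subset[OF A], of "S2 \<inter> A"] S2'(2)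
    unfolding k_def \<alpha>_def by auto
  ultimately show thesis
    using that[OF hk] two_valued_parameter_cases[OF w_ge_2 n_ge _ _ _ wa N1 N2] unfolding \<alpha>_def by blast
qed

lemma two_valued_standard_form:
  assumes A: "A \<subseteq> {1..n}" and c_eq: "\<forall>i\<in>{1..n}. c i = q + of_bool (i \<in> A)"
  shows "standard_form n w (sum c)"
proof -
  have sum_eq: "sum c S = real w * q + real (card (S \<inter> A))" if "S \<in> k_subsets {1..n} w" for S
    using sum_two_valued[of S c q A] c_eq k_subsetsD[OF finite_atLeastAtMost that]
    by (metis subsetD)
  obtain k where hk: "real w * q + real k = -1" and cases:
    "(k = 0 \<and> card A = 2 \<and> n = 2 * w) \<or> (k = 0 \<and> w = 2 \<and> n = 2 * card A)
      \<or> (n = 2 * w \<and> card A + 2 = n \<and> k + 2 = w)"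
    using two_valued_parameters[OF A c_eq] by blast
  then consider "k = 0" "card A = 2" "n = 2 * w" | "k = 0" "w = 2" "n = 2 * card A"
    | "n = 2 * w" "card A + 2 = n" "k + 2 = w"
    by blast
  then show ?thesis
  proof cases
    case 1
    then have "\<forall>S\<in>k_subsets {1..n} w. 1 * sum c S = real (card (S \<inter> A)) - 1"
      using sum_eq hk by simp
    then show ?thesis by (rule standard_form_f2I[OF 1(3) A 1(2) one_neq_zero])
  next
    case 2
    then have "\<forall>S\<in>k_subsets {1..n} w. 1 * sum c S = real (card (S \<inter> A)) - 1"
      using sum_eq hk by simp
    then show ?thesis by (rule standard_form_f4I[OF 2(2) A 2(3) one_neq_zero])
  next
    case 3
    define B where "B = {1..n} - A"
    have B: "B \<subseteq> {1..n}" "card B = 2"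
      using card_Diff_subset[OF finite_subset[OF A] A] 3 unfolding B_def by auto
    have "-1 * sum c S = real (card (S \<inter> B)) - 1" if S: "S \<in> k_subsets {1..n} w" for S
    proof -
      note S' = k_subsetsD[OF finite_atLeastAtMost S]
      have "card (S \<inter> A) + card (S \<inter> B) = w"
        using card_Int_Diff[OF S'(3), of A] S'(1,2) unfolding B_def
        by (simp add: Diff_eq Int_assoc[symmetric] Int_absorb2)
      then show ?thesis using sum_eq[OF S] hk 3 by simp
    qed
    then show ?thesis by (intro standard_form_f2I[OF 3(1) B, of "-1"]) auto
  qed
qed

lemma standard_form_sum: "standard_form n w (sum c)"
proof -
  have ne: "c ` {1..n} \<noteq> {}" "finite (c ` {1..n})" using n_ge w_ge_2 by auto
  obtain a where a: "a \<in> {1..n}" "c a = Max (c ` {1..n})" using Max_in[OF ne(2,1)] by auto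
  obtain b where b: "b \<in> {1..n}" "c b = Min (c ` {1..n})" using Min_in[OF ne(2,1)] by auto
  have range: "c b \<le> c i" "c i \<le> c a" if "i \<in> {1..n}" for i
    using a b that ne by auto
  have "c a \<noteq> c b" using weights_not_constant[of "c a"] range by force
  then have "c a - c b = 1 \<or> c a - c b = 2"
    using weight_diff_mem[OF a(1) b(1)] range[OF a(1)] by auto
  then show ?thesis
  proof
    assume d: "c a - c b = 1"
    define A where "A = {i \<in> {1..n}. c i = c b + 1}"
    have "c i = c b + of_bool (i \<in> A)" if i: "i \<in> {1..n}" for i
      using weight_diff_mem[OF i b(1)] range[OF i] d i unfolding A_def by auto
    moreover have "A \<subseteq> {1..n}" unfolding A_def by auto
    ultimately show ?thesis using two_valued_standard_form by blast
  next
    assume "c a - c b = 2"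
    then show ?thesis by (rule weight_gap_2_standard_form[OF a(1) b(1)])
  qed
qed

end

theorem theorem1:
  fixes n w :: nat and f :: "nat set \<Rightarrow> real"
  assumes "w \<ge> 2" and "n \<ge> 2 * w"
    and "\<forall>x\<in>johnson_vertices n w. f x \<in> {-1, 0, 1}"
    and "is_eigenfunction n w (lambda1 n w) f"
  shows "\<exists>c::real. c \<noteq> 0 \<and>
           (equivalent_fun n w (\<lambda>x. c * f x) f1
            \<or> (n = 2 * w \<and> equivalent_fun n w (\<lambda>x. c * f x) f2)
            \<or> (n = 2 * w \<and> equivalent_fun n w (\<lambda>x. c * f x) f3)
            \<or> (w = 2 \<and> even n \<and> equivalent_fun n w (\<lambda>x. c * f x) (f4 n)))"
proof -
  obtain c where c: "sum c {1..n} = 0" and f: "\<forall>S\<in>k_subsets {1..n} w. f S = sum c S"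
    using eigenfunction_eq_sum_weights[of "{1..n}" w f] lambda1_eigenfunction_up_down[OF assms(4)] assms(1,2)
    by auto
  interpret ternary_sum_fun n w c
  proof
    show "\<And>S. S \<in> k_subsets {1..n} w \<Longrightarrow> sum c S \<in> {-1, 0, 1}"
      using assms(3) f by (simp add: johnson_vertices_eq_k_subsets)
    show "\<exists>S\<in>k_subsets {1..n} w. sum c S \<noteq> 0"
      using assms(4) f by (auto simp: is_eigenfunction_def johnson_vertices_eq_k_subsets)
  qed (use assms(1,2) c in auto)
  have "standard_form n w f" using standard_form_sum standard_form_cong[OF f] by simp
  then show ?thesis unfolding standard_form_def .
qed

end
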